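(* Let $(X, A, \rightarrow)$ be a labelled transition system with finite state set $X$ and a distinguished silent action $\tau \in A$. In the branching bisimulation game on this LTS, the winning region $\mathcal{W}_S$ of Spoiler is the least set $W$ such that $\lozenge_{S,1} \Box_D \lozenge_{S,2} W \subseteq W$.
   Context: Write $x \Longrightarrow x'$ if there is a (possibly empty) sequence of $\tau$-transitions from $x$ to $x'$, and $x \xrightarrow{(\alpha)} x'$ if either $x \xrightarrow{\alpha} x'$, or $\alpha = \tau$ and $x = x'$. Branching bisimulation game: Spoiler configurations are $C_S = X^2 \cup X^5$, written $[x,y]$ and $[x,x',y,y',y'']$; Duplicator configurations are $C_D = X \times A \times X \times X$, written $\langle x,\alpha,x',y\rangle$. Spoiler moves: $\rightarrow_{S,1} \subseteq X^2 \times C_D$ consists of moves from $[x,y]$ to $\langle x,\alpha,x',y\rangle$ if $x \xrightarrow{\alpha} x'$, and from $[x,y]$ to $\langle y,\alpha,y',x\rangle$ if $y \xrightarrow{\alpha} y'$; $\rightarrow_{S,2} \subseteq X^5 \times X^2$ consists of moves from $[x,x',y,y',y'']$ to $[x,y']$ or to $[x',y'']$. Duplicator moves $\rightarrow_D$: from $\langle x,\alpha,x',y\rangle$ to $[x,x',y,y',y'']$ if $y \Longrightarrow y' \xrightarrow{(\alpha)} y''$. A play from $[x,y]$ is a finite or infinite sequence of configurations starting at $[x,y]$, each next one a move from the previous; it is maximal if infinite or no move is possible from its last configuration. Spoiler wins a finite maximal play iff its last configuration is a Duplicator configuration; all other maximal plays are won by Duplicator. A (positional) Spoiler strategy maps each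 Spoiler configuration to a Spoiler move from it; a play is consistent with it if all Spoiler moves in the play follow the strategy; it is winning from $[x,y]$ if all maximal plays from $[x,y]$ consistent with it are won by Spoiler. $\mathcal{W}_S$ is the set of configurations $[x,y] \in X^2$ from which Spoiler has a winning strategy. Modalities: for a move relation $\rightarrow_R$ and a set $W$ of configurations, $\lozenge_R W = \{c \mid \exists c'.\ c \rightarrow_R c' \wedge c' \in W\}$ and $\Box_R W = \{c \mid \forall c'.\ c \rightarrow_R c' \Rightarrow c' \in W\}$, where $c$ ranges over the source configurations of $\rightarrow_R$ (i.e. $X^2$ for $\rightarrow_{S,1}$, $C_D$ for $\rightarrow_D$, $X^5$ for $\rightarrow_{S,2}$). *)

theory Defs
  imports Main
begin

datatype ('x, 'a) conf =
    SP 'x 'x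
  | SF 'x 'x 'x 'x 'x
  | DC 'x 'a 'x 'x

definition tau_steps :: "('x \<Rightarrow> 'a \<Rightarrow> 'x \<Rightarrow> bool) \<Rightarrow> 'a \<Rightarrow> 'x \<Rightarrow> 'x \<Rightarrow> bool" where
  "tau_steps T tau = (\<lambda>u v. T u tau v)\<^sup>*\<^sup>*"

definition opt_step :: "('x \<Rightarrow> 'a \<Rightarrow> 'x \<Rightarrow> bool) \<Rightarrow> 'a \<Rightarrow> 'x \<Rightarrow> 'a \<Rightarrow> 'x \<Rightarrow> bool" where
  "opt_step T tau x \<alpha> x' \<longleftrightarrow> T x \<alpha> x' \<or> (\<alpha> = tau \<and> x = x')"

definition mvS1 :: "('x \<Rightarrow> 'a \<Rightarrow> 'x \<Rightarrow> bool) \<Rightarrow> ('x, 'a) conf \<Rightarrow> ('x, 'a) conf \<Rightarrow> bool" where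
  "mvS1 T c c' \<longleftrightarrow> (\<exists>x y \<alpha> z. c = SP x y \<and>
      ((c' = DC x \<alpha> z y \<and> T x \<alpha> z) \<or> (c' = DC y \<alpha> z x \<and> T y \<alpha> z)))"

definition mvS2 :: "('x, 'a) conf \<Rightarrow> ('x, 'a) conf \<Rightarrow> bool" where
  "mvS2 c c' \<longleftrightarrow> (\<exists>x x' y y' y''. c = SF x x' y y' y'' \<and> (c' = SP x y' \<or> c' = SP x' y''))"

definition mvD :: "('x \<Rightarrow> 'a \<Rightarrow> 'x \<Rightarrow> bool) \<Rightarrow> 'a \<Rightarrow> ('x, 'a) conf \<Rightarrow> ('x, 'a) conf \<Rightarrow> bool" where
  "mvD T tau c c' \<longleftrightarrow> (\<exists>x \<alpha> x' y y' y''. c = DC x \<alpha> x' y \<and> c' = SF x x' y y' y'' \<and>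
      tau_steps T tau y y' \<and> opt_step T tau y' \<alpha> y'')"

definition mvS :: "('x \<Rightarrow> 'a \<Rightarrow> 'x \<Rightarrow> bool) \<Rightarrow> ('x, 'a) conf \<Rightarrow> ('x, 'a) conf \<Rightarrow> bool" where
  "mvS T c c' \<longleftrightarrow> mvS1 T c c' \<or> mvS2 c c'"

definition move :: "('x \<Rightarrow> 'a \<Rightarrow> 'x \<Rightarrow> bool) \<Rightarrow> 'a \<Rightarrow> ('x, 'a) conf \<Rightarrow> ('x, 'a) conf \<Rightarrow> bool" where
  "move T tau c c' \<longleftrightarrow> mvS T c c' \<or> mvD T tau c c'"

fun is_spoiler :: "('x, 'a) conf \<Rightarrow> bool" where
  "is_spoiler (DC _ _ _ _) = False"
| "is_spoiler _ = True"

definition srcS1 :: "('x, 'a) conf set" where "srcS1 = {SP x y | x y. True}"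
definition srcS2 :: "('x, 'a) conf set" where "srcS2 = {SF x x' y y' y'' | x x' y y' y''. True}"
definition srcD :: "('x, 'a) conf set" where "srcD = {DC x \<alpha> x' y | x \<alpha> x' y. True}"

definition Dia :: "('c \<Rightarrow> 'c \<Rightarrow> bool) \<Rightarrow> 'c set \<Rightarrow> 'c set \<Rightarrow> 'c set" where
  "Dia R src W = {c \<in> src. \<exists>c'. R c c' \<and> c' \<in> W}"

definition Box :: "('c \<Rightarrow> 'c \<Rightarrow> bool) \<Rightarrow> 'c set \<Rightarrow> 'c set \<Rightarrow> 'c set" where
  "Box R src W = {c \<in> src. \<forall>c'. R c c' \<longrightarrow> c' \<in> W}"

definition spoiler_strategy :: "('x \<Rightarrow> 'a \<Rightarrow> 'x \<Rightarrow> bool) \<Rightarrow> (('x, 'a) conf \<Rightarrow> ('x, 'a) conf) \<Rightarrow> bool" where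
  "spoiler_strategy T \<sigma> \<longleftrightarrow> (\<forall>c. is_spoiler c \<and> (\<exists>c'. mvS T c c') \<longrightarrow> mvS T c (\<sigma> c))"

definition fin_play_cons ::
  "('x \<Rightarrow> 'a \<Rightarrow> 'x \<Rightarrow> bool) \<Rightarrow> 'a \<Rightarrow> (('x, 'a) conf \<Rightarrow> ('x, 'a) conf) \<Rightarrow> ('x, 'a) conf \<Rightarrow> ('x, 'a) conf list \<Rightarrow> bool" where
  "fin_play_cons T tau \<sigma> c cs \<longleftrightarrow> cs \<noteq> [] \<and> hd cs = c \<and>
     (\<forall>i. Suc i < length cs \<longrightarrow> move T tau (cs ! i) (cs ! Suc i)) \<and>
     (\<forall>i. Suc i < length cs \<longrightarrow> is_spoiler (cs ! i) \<longrightarrow> cs ! Suc i = \<sigma> (cs ! i))"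

definition maximal_fin :: "('x \<Rightarrow> 'a \<Rightarrow> 'x \<Rightarrow> bool) \<Rightarrow> 'a \<Rightarrow> ('x, 'a) conf list \<Rightarrow> bool" where
  "maximal_fin T tau cs \<longleftrightarrow> \<not> (\<exists>c'. move T tau (last cs) c')"

definition inf_play_cons ::
  "('x \<Rightarrow> 'a \<Rightarrow> 'x \<Rightarrow> bool) \<Rightarrow> 'a \<Rightarrow> (('x, 'a) conf \<Rightarrow> ('x, 'a) conf) \<Rightarrow> ('x, 'a) conf \<Rightarrow> (nat \<Rightarrow> ('x, 'a) conf) \<Rightarrow> bool" where
  "inf_play_cons T tau \<sigma> c f \<longleftrightarrow> f 0 = c \<and>
     (\<forall>i. move T tau (f i) (f (Suc i))) \<and>
     (\<forall>i. is_spoiler (f i) \<longrightarrow> f (Suc i) = \<sigma> (f i))"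

definition winning_strategy ::
  "('x \<Rightarrow> 'a \<Rightarrow> 'x \<Rightarrow> bool) \<Rightarrow> 'a \<Rightarrow> (('x, 'a) conf \<Rightarrow> ('x, 'a) conf) \<Rightarrow> ('x, 'a) conf \<Rightarrow> bool" where
  "winning_strategy T tau \<sigma> c \<longleftrightarrow> spoiler_strategy T \<sigma> \<and>
     (\<forall>cs. fin_play_cons T tau \<sigma> c cs \<and> maximal_fin T tau cs \<longrightarrow> \<not> is_spoiler (last cs)) \<and>
     (\<not> (\<exists>f. inf_play_cons T tau \<sigma> c f))"

definition W_S :: "('x \<Rightarrow> 'a \<Rightarrow> 'x \<Rightarrow> bool) \<Rightarrow> 'a \<Rightarrow> ('x, 'a) conf set" where
  "W_S T tau = {SP x y | x y. \<exists>\<sigma>. winning_strategy T tau \<sigma> (SP x y)}"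

definition game_op :: "('x \<Rightarrow> 'a \<Rightarrow> 'x \<Rightarrow> bool) \<Rightarrow> 'a \<Rightarrow> ('x, 'a) conf set \<Rightarrow> ('x, 'a) conf set" where
  "game_op T tau W = Dia (mvS1 T) srcS1 (Box (mvD T tau) srcD (Dia mvS2 srcS2 W))"

end

theory Submission
  imports Defs "HOL-Library.While_Combinator"
begin

text \<open>If \<open>W\<close> is closed under \<open>game_op\<close>, Duplicator can stay forever outside \<open>W\<close> (and outside the matching intermediate
  layers of \<open>game_op W\<close>), so against any Spoiler strategy some consistent maximal play is
  infinite or ends in a stuck Spoiler configuration. Conversely, as \<open>X\<close> is finite the least
  fixed point is a finite Kleene iterate of \<open>game_op\<close>; the \<open>n\<close>-th iterate lies in level \<open>3n\<close> of
  Spoiler's attractor, where the strategy of always moving one level down forces every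
  consistent play to descend and to end at a stuck Duplicator configuration.\<close>

lemma lfp_eq_Kleene_iter_if_bounded:
  fixes f :: "'a set \<Rightarrow> 'a set"
  assumes "mono f" and "\<And>X. X \<subseteq> C \<Longrightarrow> f X \<subseteq> C" and "finite C"
  shows "\<exists>k. lfp f = (f ^^ k) {}"
proof -
  obtain P where "while_option (\<lambda>A. f A \<noteq> A) f {} = Some P"
    using while_option_finite_subset_Some[OF assms] by blast
  from while_option_stop2[OF this] obtain k where "P = (f ^^ k) {}" and "f P = P"
    by blast
  then have "lfp f = (f ^^ k) {}"
    by (intro lfp_Kleene_iter[OF assms(1)]) simp
  then show ?thesis ..
qed

lemma move_spoiler_iff: "is_spoiler c \<Longrightarrow> move T tau c c' \<longleftrightarrow> mvS T c c'"
  by (cases c) (auto simp: move_def mvD_def)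

lemma move_duplicator_iff: "\<not> is_spoiler c \<Longrightarrow> move T tau c c' \<longleftrightarrow> mvD T tau c c'"
  by (cases c) (auto simp: move_def mvS_def mvS1_def mvS2_def)

lemma spoiler_strategy_move:
  assumes "spoiler_strategy T \<sigma>" and "is_spoiler c" and "move T tau c c'"
  shows "move T tau c (\<sigma> c)"
  using assms by (auto simp: spoiler_strategy_def move_spoiler_iff)

lemma mono_game_op: "mono (game_op T tau)"
  unfolding mono_def game_op_def Dia_def Box_def by blast

lemma fin_play_cons_map_upt:
  assumes "f 0 = c"
    and "\<And>m. m < n \<Longrightarrow> move T tau (f m) (f (Suc m))"
    and "\<And>m. m < n \<Longrightarrow> is_spoiler (f m) \<Longrightarrow> f (Suc m) = \<sigma> (f m)"
  shows "fin_play_cons T tau \<sigma> c (map f [0..<Suc n])"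
proof -
  have "hd (map f [0..<Suc n]) = c"
    using assms(1) by (simp add: upt_conv_Cons del: upt_Suc)
  then show ?thesis
    using assms(2,3) by (simp add: fin_play_cons_def del: upt_Suc)
qed

definition duplicator_trap :: "('x \<Rightarrow> 'a \<Rightarrow> 'x \<Rightarrow> bool) \<Rightarrow> 'a \<Rightarrow> ('x, 'a) conf set \<Rightarrow> bool" where
  "duplicator_trap T tau U \<longleftrightarrow>
     (\<forall>c\<in>U. is_spoiler c \<longrightarrow> (\<forall>c'. move T tau c c' \<longrightarrow> c' \<in> U)) \<and>
     (\<forall>c\<in>U. \<not> is_spoiler c \<longrightarrow> (\<exists>c'\<in>U. move T tau c c'))"

definition trap_response ::
  "('x \<Rightarrow> 'a \<Rightarrow> 'x \<Rightarrow> bool) \<Rightarrow> 'a \<Rightarrow> ('x, 'a) conf set \<Rightarrow> (('x, 'a) conf \<Rightarrow> ('x, 'a) conf) \<Rightarrow>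
    ('x, 'a) conf \<Rightarrow> ('x, 'a) conf" where
  "trap_response T tau U \<sigma> d = (if is_spoiler d then \<sigma> d else SOME d'. d' \<in> U \<and> move T tau d d')"

lemma trap_response_move:
  assumes "duplicator_trap T tau U" and "spoiler_strategy T \<sigma>"
    and "d \<in> U" and "\<exists>d'. move T tau d d'"
  shows "move T tau d (trap_response T tau U \<sigma> d) \<and> trap_response T tau U \<sigma> d \<in> U"
proof (cases "is_spoiler d")
  case True
  from assms(4) obtain d' where "move T tau d d'" ..
  with assms(2) True have "move T tau d (\<sigma> d)"
    by (rule spoiler_strategy_move)
  then show ?thesis
    using True assms(1,3) by (auto simp: trap_response_def duplicator_trap_def)
next
  case False
  then have "\<exists>d'. d' \<in> U \<and> move T tau d d'"
    using assms by (auto simp: duplicator_trap_def)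
  from someI_ex[OF this] show ?thesis
    using False by (simp add: trap_response_def)
qed

lemma trap_not_winning:
  assumes trap: "duplicator_trap T tau U" and "c \<in> U"
  shows "\<not> winning_strategy T tau \<sigma> c"
proof
  assume win: "winning_strategy T tau \<sigma> c"
  then have strat: "spoiler_strategy T \<sigma>" by (simp add: winning_strategy_def)
  define f where "f n = (trap_response T tau U \<sigma> ^^ n) c" for n
  have f_Suc: "f (Suc n) = trap_response T tau U \<sigma> (f n)" for n
    by (simp add: f_def)
  note response_move = trap_response_move[OF trap strat]
  have play_in_trap: "f n \<in> U" if "\<forall>m<n. \<exists>d. move T tau (f m) d" for n
    using that by (induction n) (auto simp: f_def \<open>c \<in> U\<close> response_move)
  have f_move: "move T tau (f n) (f (Suc n))" if "\<forall>m\<le>n. \<exists>d. move T tau (f m) d" for n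
    using that play_in_trap[of n] response_move f_Suc by auto
  have f_cons: "is_spoiler (f n) \<Longrightarrow> f (Suc n) = \<sigma> (f n)" for n
    by (simp add: f_Suc trap_response_def)
  show False
  proof (cases "\<forall>n. \<exists>d. move T tau (f n) d")
    case True
    then have "inf_play_cons T tau \<sigma> c f"
      using f_move f_cons by (auto simp: inf_play_cons_def f_def)
    then show False using win by (auto simp: winning_strategy_def)
  next
    case False
    define n where "n = (LEAST n. \<not> (\<exists>d. move T tau (f n) d))"
    have stuck: "\<not> (\<exists>d. move T tau (f n) d)"
      using False LeastI_ex[of "\<lambda>n. \<not> (\<exists>d. move T tau (f n) d)"] by (auto simp: n_def)
    have before: "\<forall>m<n. \<exists>d. move T tau (f m) d"
      using not_less_Least n_def by blast
    have "fin_play_cons T tau \<sigma> c (map f [0..<Suc n])"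
    proof (rule fin_play_cons_map_upt)
      show "f 0 = c"
        by (simp add: f_def)
      show "move T tau (f m) (f (Suc m))" if "m < n" for m
        using that before by (intro f_move) auto
    qed (rule f_cons)
    moreover have "maximal_fin T tau (map f [0..<Suc n])"
      using stuck by (simp add: maximal_fin_def)
    moreover have "is_spoiler (last (map f [0..<Suc n]))"
      using play_in_trap[OF before] stuck trap by (auto simp: duplicator_trap_def)
    ultimately show False using win by (auto simp: winning_strategy_def)
  qed
qed

fun avoids :: "('x \<Rightarrow> 'a \<Rightarrow> 'x \<Rightarrow> bool) \<Rightarrow> 'a \<Rightarrow> ('x, 'a) conf set \<Rightarrow> ('x, 'a) conf \<Rightarrow> bool" where
  "avoids T tau W (SP x y) \<longleftrightarrow> SP x y \<notin> W"
| "avoids T tau W (DC x \<alpha> x' y) \<longleftrightarrow> DC x \<alpha> x' y \<notin> Box (mvD T tau) srcD (Dia mvS2 srcS2 W)"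
| "avoids T tau W (SF x x' y y' y'') \<longleftrightarrow> SF x x' y y' y'' \<notin> Dia mvS2 srcS2 W"

lemma avoids_duplicator_trap:
  assumes "game_op T tau W \<subseteq> W"
  shows "duplicator_trap T tau {c. avoids T tau W c}"
  unfolding duplicator_trap_def
proof (intro conjI ballI impI allI)
  fix c c'
  assume avoid: "c \<in> {c. avoids T tau W c}" and "is_spoiler c" and "move T tau c c'"
  then have mv: "mvS T c c'"
    by (simp add: move_spoiler_iff)
  show "c' \<in> {c. avoids T tau W c}"
  proof (cases c)
    case (SP x y)
    then have "mvS1 T c c'"
      using mv by (simp add: mvS_def mvS2_def)
    then obtain x1 \<alpha> x2 y1 where c': "c' = DC x1 \<alpha> x2 y1"
      unfolding mvS1_def by blast
    have "c' \<notin> Box (mvD T tau) srcD (Dia mvS2 srcS2 W)"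
    proof
      assume "c' \<in> Box (mvD T tau) srcD (Dia mvS2 srcS2 W)"
      then have "c \<in> game_op T tau W"
        using SP \<open>mvS1 T c c'\<close> unfolding game_op_def Dia_def srcS1_def by blast
      then have "c \<in> W"
        using assms by blast
      then show False
        using avoid SP by simp
    qed
    then show ?thesis
      using c' by simp
  next
    case (SF x x' y y' y'')
    then have "mvS2 c c'"
      using mv by (simp add: mvS_def mvS1_def)
    then obtain x1 y1 where c': "c' = SP x1 y1"
      unfolding mvS2_def by blast
    have "c' \<notin> W"
    proof
      assume "c' \<in> W"
      then have "c \<in> Dia mvS2 srcS2 W"
        using SF \<open>mvS2 c c'\<close> unfolding Dia_def srcS2_def by blast
      then show False
        using avoid SF by simp
    qed
    then show ?thesis
      using c' by simp
  qed (use \<open>is_spoiler c\<close> in simp)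
next
  fix c
  assume avoid: "c \<in> {c. avoids T tau W c}" and "\<not> is_spoiler c"
  then obtain x \<alpha> x' y where c: "c = DC x \<alpha> x' y"
    by (cases c) auto
  then obtain c' where mv: "mvD T tau c c'" and "c' \<notin> Dia mvS2 srcS2 W"
    using avoid by (auto simp: Box_def srcD_def)
  moreover obtain y' y'' where "c' = SF x x' y y' y''"
    using mv c by (auto simp: mvD_def)
  ultimately have "c' \<in> {c. avoids T tau W c}"
    by simp
  moreover have "move T tau c c'"
    using mv \<open>\<not> is_spoiler c\<close> by (simp add: move_duplicator_iff)
  ultimately show "\<exists>c'\<in>{c. avoids T tau W c}. move T tau c c'"
    by blast
qed

lemma W_S_subset_prefixpoint:
  assumes "game_op T tau W \<subseteq> W"
  shows "W_S T tau \<subseteq> W"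
proof
  fix c
  assume "c \<in> W_S T tau"
  then obtain x y \<sigma> where c: "c = SP x y" and "winning_strategy T tau \<sigma> c"
    by (auto simp: W_S_def)
  then have "\<not> avoids T tau W c"
    using trap_not_winning[OF avoids_duplicator_trap[OF assms]] by blast
  then show "c \<in> W"
    using c by simp
qed

definition cpre :: "('x \<Rightarrow> 'a \<Rightarrow> 'x \<Rightarrow> bool) \<Rightarrow> 'a \<Rightarrow> ('x, 'a) conf set \<Rightarrow> ('x, 'a) conf set" where
  "cpre T tau W =
     {c. is_spoiler c \<and> (\<exists>c'\<in>W. mvS T c c')} \<union>
     {c. \<not> is_spoiler c \<and> (\<forall>c'. move T tau c c' \<longrightarrow> c' \<in> W)}"

definition attractor :: "('x \<Rightarrow> 'a \<Rightarrow> 'x \<Rightarrow> bool) \<Rightarrow> 'a \<Rightarrow> nat \<Rightarrow> ('x, 'a) conf set" where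
  "attractor T tau k = (cpre T tau ^^ k) {}"

lemma mono_cpre: "mono (cpre T tau)"
  by (rule monoI) (auto simp: cpre_def)

lemma attractor_0 [simp]: "attractor T tau 0 = {}"
  by (simp add: attractor_def)

lemma attractor_Suc: "attractor T tau (Suc k) = cpre T tau (attractor T tau k)"
  by (simp add: attractor_def)

lemma attractor_mono: "k \<le> l \<Longrightarrow> attractor T tau k \<subseteq> attractor T tau l"
  unfolding attractor_def using funpow_decreasing[OF _ mono_cpre] by (simp add: bot_set_def)

lemma game_op_subset_cpre3: "game_op T tau W \<subseteq> cpre T tau (cpre T tau (cpre T tau W))"
proof -
  have Dia_S1: "Dia (mvS1 T) srcS1 V \<subseteq> cpre T tau V"
    and Box_D: "Box (mvD T tau) srcD V \<subseteq> cpre T tau V"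
    and Dia_S2: "Dia mvS2 srcS2 V \<subseteq> cpre T tau V" for V
    by (auto simp: Dia_def Box_def srcS1_def srcS2_def srcD_def cpre_def mvS_def
        move_duplicator_iff)
  have "game_op T tau W \<subseteq> cpre T tau (Box (mvD T tau) srcD (Dia mvS2 srcS2 W))"
    unfolding game_op_def by (rule Dia_S1)
  also have "\<dots> \<subseteq> cpre T tau (cpre T tau (Dia mvS2 srcS2 W))"
    by (rule monoD[OF mono_cpre Box_D])
  also have "\<dots> \<subseteq> cpre T tau (cpre T tau (cpre T tau W))"
    by (intro monoD[OF mono_cpre] Dia_S2)
  finally show ?thesis .
qed

lemma Kleene_iter_game_op_subset_attractor:
  "(game_op T tau ^^ n) {} \<subseteq> attractor T tau (3 * n)"
proof (induction n)
  case (Suc n)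
  have "(game_op T tau ^^ Suc n) {} \<subseteq> game_op T tau (attractor T tau (3 * n))"
    using monoD[OF mono_game_op Suc.IH] by simp
  also have "\<dots> \<subseteq> attractor T tau (Suc (Suc (Suc (3 * n))))"
    unfolding attractor_Suc by (rule game_op_subset_cpre3)
  also have "\<dots> = attractor T tau (3 * Suc n)"
    by (rule arg_cong[where f = "attractor T tau"]) simp
  finally show ?case .
qed simp

text \<open>One choice serves all levels \<open>k\<close> at once because the levels increase; outside the
  attractor it is an arbitrary Spoiler move.\<close>
definition attractor_strategy :: "('x \<Rightarrow> 'a \<Rightarrow> 'x \<Rightarrow> bool) \<Rightarrow> 'a \<Rightarrow> ('x, 'a) conf \<Rightarrow> ('x, 'a) conf" where
  "attractor_strategy T tau c =
     (SOME c'. mvS T c c' \<and> (\<forall>k. c \<in> attractor T tau (Suc k) \<longrightarrow> c' \<in> attractor T tau k))"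

lemma attractor_strategy_spec:
  assumes "is_spoiler c" and "\<exists>c'. mvS T c c'"
  shows "mvS T c (attractor_strategy T tau c) \<and>
    (\<forall>k. c \<in> attractor T tau (Suc k) \<longrightarrow> attractor_strategy T tau c \<in> attractor T tau k)"
proof -
  have "\<exists>c'. mvS T c c' \<and> (\<forall>k. c \<in> attractor T tau (Suc k) \<longrightarrow> c' \<in> attractor T tau k)"
  proof (cases "\<exists>k. c \<in> attractor T tau (Suc k)")
    case True
    define k0 where "k0 = (LEAST k. c \<in> attractor T tau (Suc k))"
    have "c \<in> cpre T tau (attractor T tau k0)"
      using LeastI_ex[OF True] by (simp add: k0_def attractor_Suc)
    then obtain c' where "mvS T c c'" and c'_k0: "c' \<in> attractor T tau k0"
      using assms(1) by (auto simp: cpre_def)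
    have "c' \<in> attractor T tau k" if "c \<in> attractor T tau (Suc k)" for k
    proof -
      have "k0 \<le> k"
        unfolding k0_def using that by (rule Least_le)
      from attractor_mono[OF this] c'_k0 show ?thesis
        by (rule subsetD)
    qed
    then show ?thesis
      using \<open>mvS T c c'\<close> by blast
  next
    case False
    then show ?thesis using assms(2) by blast
  qed
  then show ?thesis
    unfolding attractor_strategy_def by (rule someI_ex)
qed

lemma spoiler_strategy_attractor_strategy: "spoiler_strategy T (attractor_strategy T tau)"
  unfolding spoiler_strategy_def
proof (intro allI impI)
  fix c
  assume "is_spoiler c \<and> (\<exists>c'. mvS T c c')"
  then show "mvS T c (attractor_strategy T tau c)"
    using attractor_strategy_spec[of c T] by blast
qed

lemma attractor_Suc_move:
  assumes "c \<in> attractor T tau (Suc k)" and "move T tau c c'"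
    and "is_spoiler c \<Longrightarrow> c' = attractor_strategy T tau c"
  shows "c' \<in> attractor T tau k"
proof (cases "is_spoiler c")
  case True
  then show ?thesis
    using assms attractor_strategy_spec[of c T tau] by (auto simp: move_spoiler_iff)
next
  case False
  then show ?thesis
    using assms by (auto simp: attractor_Suc cpre_def)
qed

lemma attractor_spoiler_not_stuck:
  "c \<in> attractor T tau k \<Longrightarrow> is_spoiler c \<Longrightarrow> \<exists>c'. move T tau c c'"
  by (cases k) (auto simp: attractor_Suc cpre_def move_spoiler_iff)

lemma attractor_play_descends:
  assumes "g 0 \<in> attractor T tau k"
    and moves: "\<And>j. j < i \<Longrightarrow> move T tau (g j) (g (Suc j))"
    and cons: "\<And>j. j < i \<Longrightarrow> is_spoiler (g j) \<Longrightarrow> g (Suc j) = attractor_strategy T tau (g j)"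
  shows "g i \<in> attractor T tau (k - i) \<and> i < k"
  using moves cons
proof (induction i)
  case 0
  then show ?case using assms(1) by (cases k) auto
next
  case (Suc i)
  then have "g (Suc i) \<in> attractor T tau (k - Suc i)"
    using attractor_Suc_move[of "g i" T tau "k - Suc i"] by (simp add: Suc_diff_Suc)
  then show ?case by (cases "k - Suc i") auto
qed

lemma attractor_winning:
  assumes "c \<in> attractor T tau k"
  shows "winning_strategy T tau (attractor_strategy T tau) c"
  unfolding winning_strategy_def
proof (intro conjI allI impI)
  show "spoiler_strategy T (attractor_strategy T tau)"
    by (rule spoiler_strategy_attractor_strategy)
next
  fix cs
  assume play: "fin_play_cons T tau (attractor_strategy T tau) c cs \<and> maximal_fin T tau cs"
  then have "cs \<noteq> []" and "cs ! 0 = c"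
    by (auto simp: fin_play_cons_def hd_conv_nth)
  from play have stuck: "\<not> (\<exists>c'. move T tau (last cs) c')"
    by (simp add: maximal_fin_def)
  from play have moves: "\<And>j. j < length cs - 1 \<Longrightarrow> move T tau (cs ! j) (cs ! Suc j)"
    and cons: "\<And>j. j < length cs - 1 \<Longrightarrow> is_spoiler (cs ! j) \<Longrightarrow>
      cs ! Suc j = attractor_strategy T tau (cs ! j)"
    by (simp_all add: fin_play_cons_def less_diff_conv)
  have "cs ! (length cs - 1) \<in> attractor T tau (k - (length cs - 1))"
    using attractor_play_descends[where g = "(!) cs" and i = "length cs - 1", OF _ moves cons]
      assms \<open>cs ! 0 = c\<close> by blast
  then have "last cs \<in> attractor T tau (k - (length cs - 1))"
    by (simp add: last_conv_nth \<open>cs \<noteq> []\<close>)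
  then show "\<not> is_spoiler (last cs)"
    using attractor_spoiler_not_stuck stuck by metis
next
  show "\<not> (\<exists>f. inf_play_cons T tau (attractor_strategy T tau) c f)"
  proof
    assume "\<exists>f. inf_play_cons T tau (attractor_strategy T tau) c f"
    then obtain f where play: "inf_play_cons T tau (attractor_strategy T tau) c f" ..
    then have "f 0 = c" and moves: "\<And>j. move T tau (f j) (f (Suc j))"
      and cons: "\<And>j. is_spoiler (f j) \<Longrightarrow> f (Suc j) = attractor_strategy T tau (f j)"
      by (simp_all add: inf_play_cons_def)
    from attractor_play_descends[where g = f and i = k, OF _ moves cons] have "k < k"
      using assms \<open>f 0 = c\<close> by blast
    then show False ..
  qed
qed

lemma lfp_game_op_subset_W_S:
  fixes T :: "'x::finite \<Rightarrow> 'a \<Rightarrow> 'x \<Rightarrow> bool"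
  shows "lfp (game_op T tau) \<subseteq> W_S T tau"
proof
  have game_op_SP: "game_op T tau W \<subseteq> srcS1" for W
    by (auto simp: game_op_def Dia_def)
  have "srcS1 = case_prod SP ` (UNIV :: ('x \<times> 'x) set)"
    by (auto simp: srcS1_def)
  then have "finite (srcS1 :: ('x, 'a) conf set)"
    by (metis finite finite_imageI)
  then obtain n where n: "lfp (game_op T tau) = (game_op T tau ^^ n) {}"
    using lfp_eq_Kleene_iter_if_bounded[OF mono_game_op game_op_SP] by blast
  fix c
  assume c: "c \<in> lfp (game_op T tau)"
  then have "c \<in> game_op T tau (lfp (game_op T tau))"
    by (simp add: lfp_fixpoint[OF mono_game_op])
  then obtain x y where "c = SP x y"
    using game_op_SP unfolding srcS1_def by blast
  have "c \<in> attractor T tau (3 * n)"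
    using c unfolding n by (rule subsetD[OF Kleene_iter_game_op_subset_attractor])
  then have "winning_strategy T tau (attractor_strategy T tau) c"
    by (rule attractor_winning)
  then show "c \<in> W_S T tau"
    unfolding W_S_def using \<open>c = SP x y\<close> by blast
qed

lemma W_S_eq_lfp_game_op:
  fixes T :: "'x::finite \<Rightarrow> 'a \<Rightarrow> 'x \<Rightarrow> bool"
  shows "W_S T tau = lfp (game_op T tau)"
proof (rule antisym)
  show "W_S T tau \<subseteq> lfp (game_op T tau)"
    by (rule W_S_subset_prefixpoint) (simp add: lfp_fixpoint[OF mono_game_op])
  show "lfp (game_op T tau) \<subseteq> W_S T tau"
    by (rule lfp_game_op_subset_W_S)
qed

theorem proposition2:
  fixes T :: "'x::finite \<Rightarrow> 'a \<Rightarrow> 'x \<Rightarrow> bool" and tau :: 'a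
  shows "game_op T tau (W_S T tau) \<subseteq> W_S T tau \<and>
         (\<forall>W. game_op T tau W \<subseteq> W \<longrightarrow> W_S T tau \<subseteq> W)"
proof
  show "game_op T tau (W_S T tau) \<subseteq> W_S T tau"
    by (simp add: W_S_eq_lfp_game_op lfp_fixpoint[OF mono_game_op])
  show "\<forall>W. game_op T tau W \<subseteq> W \<longrightarrow> W_S T tau \<subseteq> W"
    by (intro allI impI W_S_subset_prefixpoint)
qed

end
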